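(* Let $G$ be a $4K_1$-free graph that is minimally non-perfectly divisible. Then $G$ does not contain a clique cutset.
   Context: All graphs are finite and simple. For $S\subseteq V(G)$, $G[S]$ is the subgraph induced by $S$. $\omega(G)$ is the number of vertices in a largest clique of $G$ and $\chi(G)$ the chromatic number. A graph $G$ is perfect if $\chi(H)=\omega(H)$ for every induced subgraph $H$ of $G$. A partition $(A,B)$ of $V(G)$ is good if $G[A]$ is perfect and $\omega(G[B])<\omega(G)$. A graph $G$ is perfectly divisible if every induced subgraph $H$ of $G$ with at least one edge admits a good partition (of $V(H)$). A graph is minimally non-perfectly divisible if it is not perfectly divisible but each of its proper induced subgraphs is perfectly divisible. A set $C\subseteq V(G)$ is a clique cutset if $C$ induces a clique in $G$ and $G-C$ is disconnected. $4K_1$ is the edgeless graph on four vertices; $G$ is $4K_1$-free if it contains no stable set of size four. *)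

theory Defs
  imports Main
begin

text \<open>Induced subgraphs G[S] (S \<subseteq> V) are
represented by the pair (S, E): only adjacencies between vertices of S matter.\<close>

definition graph :: "'a set \<Rightarrow> ('a \<Rightarrow> 'a \<Rightarrow> bool) \<Rightarrow> bool" where
  "graph V E \<longleftrightarrow> finite V \<and> (\<forall>x y. E x y \<longrightarrow> E y x) \<and> (\<forall>x. \<not> E x x)"

definition clique :: "('a \<Rightarrow> 'a \<Rightarrow> bool) \<Rightarrow> 'a set \<Rightarrow> bool" where
  "clique E K \<longleftrightarrow> (\<forall>x\<in>K. \<forall>y\<in>K. x \<noteq> y \<longrightarrow> E x y)"

definition stable :: "('a \<Rightarrow> 'a \<Rightarrow> bool) \<Rightarrow> 'a set \<Rightarrow> bool" where
  "stable E S \<longleftrightarrow> (\<forall>x\<in>S. \<forall>y\<in>S. \<not> E x y)"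

definition omega :: "'a set \<Rightarrow> ('a \<Rightarrow> 'a \<Rightarrow> bool) \<Rightarrow> nat" where
  "omega V E = Max {card K | K. K \<subseteq> V \<and> clique E K}"

definition proper_colouring :: "'a set \<Rightarrow> ('a \<Rightarrow> 'a \<Rightarrow> bool) \<Rightarrow> ('a \<Rightarrow> nat) \<Rightarrow> nat \<Rightarrow> bool" where
  "proper_colouring V E f k \<longleftrightarrow>
     (\<forall>x\<in>V. f x < k) \<and> (\<forall>x\<in>V. \<forall>y\<in>V. E x y \<longrightarrow> f x \<noteq> f y)"

definition chi :: "'a set \<Rightarrow> ('a \<Rightarrow> 'a \<Rightarrow> bool) \<Rightarrow> nat" where
  "chi V E = (LEAST k. \<exists>f. proper_colouring V E f k)"

definition perfect :: "'a set \<Rightarrow> ('a \<Rightarrow> 'a \<Rightarrow> bool) \<Rightarrow> bool" where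
  "perfect V E \<longleftrightarrow> (\<forall>S\<subseteq>V. chi S E = omega S E)"

definition good_partition :: "'a set \<Rightarrow> ('a \<Rightarrow> 'a \<Rightarrow> bool) \<Rightarrow> 'a set \<Rightarrow> 'a set \<Rightarrow> bool" where
  "good_partition V E A B \<longleftrightarrow>
     A \<union> B = V \<and> A \<inter> B = {} \<and> perfect A E \<and> omega B E < omega V E"

definition has_edge :: "'a set \<Rightarrow> ('a \<Rightarrow> 'a \<Rightarrow> bool) \<Rightarrow> bool" where
  "has_edge V E \<longleftrightarrow> (\<exists>x\<in>V. \<exists>y\<in>V. E x y)"

definition perfectly_divisible :: "'a set \<Rightarrow> ('a \<Rightarrow> 'a \<Rightarrow> bool) \<Rightarrow> bool" where
  "perfectly_divisible V E \<longleftrightarrow>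
     (\<forall>S\<subseteq>V. has_edge S E \<longrightarrow> (\<exists>A B. good_partition S E A B))"

definition minimally_non_perfectly_divisible :: "'a set \<Rightarrow> ('a \<Rightarrow> 'a \<Rightarrow> bool) \<Rightarrow> bool" where
  "minimally_non_perfectly_divisible V E \<longleftrightarrow>
     \<not> perfectly_divisible V E \<and> (\<forall>S. S \<subset> V \<longrightarrow> perfectly_divisible S E)"

definition four_K1_free :: "'a set \<Rightarrow> ('a \<Rightarrow> 'a \<Rightarrow> bool) \<Rightarrow> bool" where
  "four_K1_free V E \<longleftrightarrow> \<not> (\<exists>S\<subseteq>V. card S = 4 \<and> stable E S)"

text \<open>G[V] is connected: any two vertices joined by a path inside V.
(The empty graph counts as connected, so "disconnected" means at least two components.)\<close>
definition connected_graph :: "'a set \<Rightarrow> ('a \<Rightarrow> 'a \<Rightarrow> bool) \<Rightarrow> bool" where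
  "connected_graph V E \<longleftrightarrow>
     (\<forall>x\<in>V. \<forall>y\<in>V. (\<lambda>u v. u \<in> V \<and> v \<in> V \<and> E u v)\<^sup>*\<^sup>* x y)"

definition clique_cutset :: "'a set \<Rightarrow> ('a \<Rightarrow> 'a \<Rightarrow> bool) \<Rightarrow> 'a set \<Rightarrow> bool" where
  "clique_cutset V E C \<longleftrightarrow> C \<subseteq> V \<and> clique E C \<and> \<not> connected_graph (V - C) E"

end

theory Submission
  imports Defs
begin

text \<open>Let C be a clique cutset, so V - C splits into nonempty anticomplete parts X and Y;
  by 4K1-freeness one of them, say X, is a clique. If some c \<in> C misses some x \<in> X, then
  the non-neighbours of c are c, a clique in X and a set in Y anticomplete to the non-edge cx,
  hence also a clique: three pairwise anticomplete cliques, which induce a perfect graph,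
  while the neighbourhood of c has smaller clique number. Otherwise X is complete to C, and a
  good partition (A, B) of the proper induced subgraph on C \<union> Y lifts to (A \<union> X, B), since
  gluing the clique X onto A along the clique A \<inter> C preserves perfection. So G has a good
  partition, which a minimally non-perfectly-divisible graph cannot have.\<close>

definition anticomplete :: "('a \<Rightarrow> 'a \<Rightarrow> bool) \<Rightarrow> 'a set \<Rightarrow> 'a set \<Rightarrow> bool" where
  "anticomplete E X Y \<longleftrightarrow> (\<forall>x\<in>X. \<forall>y\<in>Y. \<not> E x y)"

lemma graph_subset: "graph V E \<Longrightarrow> S \<subseteq> V \<Longrightarrow> graph S E"
  unfolding graph_def by (blast intro: finite_subset)

lemma finite_clique_cards: "finite V \<Longrightarrow> finite {card K | K. K \<subseteq> V \<and> clique E K}"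
proof -
  assume "finite V"
  moreover have "{card K | K. K \<subseteq> V \<and> clique E K} \<subseteq> card ` Pow V" by auto
  ultimately show ?thesis by (meson finite_Pow_iff finite_imageI finite_subset)
qed

lemma card_clique_le_omega: "finite V \<Longrightarrow> K \<subseteq> V \<Longrightarrow> clique E K \<Longrightarrow> card K \<le> omega V E"
  unfolding omega_def by (rule Max_ge[OF finite_clique_cards]) blast+

lemma ex_clique_card_omega:
  assumes "finite V"
  obtains K where "K \<subseteq> V" "clique E K" "card K = omega V E"
proof -
  have "{} \<subseteq> V \<and> clique E {}" by (simp add: clique_def)
  then have "{card K | K. K \<subseteq> V \<and> clique E K} \<noteq> {}" by blast
  then have "omega V E \<in> {card K | K. K \<subseteq> V \<and> clique E K}"
    unfolding omega_def using Max_in[OF finite_clique_cards[OF assms]] by blast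
  then show ?thesis using that by auto
qed

lemma omega_mono: "finite V \<Longrightarrow> S \<subseteq> V \<Longrightarrow> omega S E \<le> omega V E"
  by (metis card_clique_le_omega ex_clique_card_omega finite_subset order_trans)

lemma omega_empty: "omega {} E = 0"
  unfolding omega_def by (simp add: clique_def)

lemma omega_pos: "finite V \<Longrightarrow> v \<in> V \<Longrightarrow> 0 < omega V E"
  using card_clique_le_omega[of V "{v}" E] by (simp add: clique_def)

lemma omega_le_colours:
  assumes "finite V" and f: "proper_colouring V E f k"
  shows "omega V E \<le> k"
proof -
  obtain K where K: "K \<subseteq> V" "clique E K" "card K = omega V E"
    using ex_clique_card_omega[OF assms(1)] .
  have "inj_on f K" using K f unfolding inj_on_def clique_def proper_colouring_def by blast
  moreover have "f ` K \<subseteq> {..<k}" using K f unfolding proper_colouring_def by auto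
  ultimately have "card K \<le> k" by (metis card_image card_lessThan card_mono finite_lessThan)
  then show ?thesis using K by simp
qed

lemma ex_colouring_chi:
  assumes "graph V E"
  shows "\<exists>f. proper_colouring V E f (chi V E)"
proof -
  have "finite V" using assms unfolding graph_def by blast
  then obtain f :: "'a \<Rightarrow> nat" and n where f: "f ` V = {i. i < n}" "inj_on f V"
    using finite_imp_inj_to_nat_seg by metis
  have "proper_colouring V E f n" unfolding proper_colouring_def
  proof (intro conjI ballI impI)
    show "f x < n" if "x \<in> V" for x using f(1) that by blast
    fix x y assume "x \<in> V" "y \<in> V" "E x y"
    moreover have "x \<noteq> y" using assms \<open>E x y\<close> unfolding graph_def by blast
    ultimately show "f x \<noteq> f y" using f(2) by (metis inj_onD)
  qed
  then show ?thesis
    unfolding chi_def by (intro LeastI_ex[of "\<lambda>k. \<exists>f. proper_colouring V E f k"]) blast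
qed

lemma perfect_iff_colourable:
  assumes "graph V E"
  shows "perfect V E \<longleftrightarrow> (\<forall>S\<subseteq>V. \<exists>f. proper_colouring S E f (omega S E))"
proof -
  have "chi S E = omega S E \<longleftrightarrow> (\<exists>f. proper_colouring S E f (omega S E))" if "S \<subseteq> V" for S
  proof
    have gS: "graph S E" using graph_subset[OF assms that] .
    then obtain g where g: "proper_colouring S E g (chi S E)" using ex_colouring_chi by blast
    show "\<exists>f. proper_colouring S E f (omega S E)" if "chi S E = omega S E"
      using g that by metis
    assume "\<exists>f. proper_colouring S E f (omega S E)"
    then have "chi S E \<le> omega S E" unfolding chi_def by (auto intro: Least_le)
    moreover have "omega S E \<le> chi S E"
      using omega_le_colours[OF _ g] gS unfolding graph_def by blast
    ultimately show "chi S E = omega S E" by simp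
  qed
  then show ?thesis unfolding perfect_def by simp
qed

lemma proper_colouring_mono: "proper_colouring V E f k \<Longrightarrow> k \<le> l \<Longrightarrow> proper_colouring V E f l"
  unfolding proper_colouring_def by auto

text \<open>K receives, injectively, colours not used on D.\<close>

lemma proper_colouring_extend:
  assumes g: "graph (T \<union> K) E" and f: "proper_colouring T E f w"
    and TK: "T \<inter> K = {}" and DT: "D \<subseteq> T" and size: "card K + card D \<le> w"
    and nbrs: "\<And>u k. u \<in> T \<Longrightarrow> k \<in> K \<Longrightarrow> E u k \<Longrightarrow> u \<in> D"
  shows "\<exists>h. proper_colouring (T \<union> K) E h w"
proof -
  have finK: "finite K" and finD: "finite D"
    using g DT unfolding graph_def by (auto intro: finite_subset)
  have sym: "E x y \<Longrightarrow> E y x" and irr: "E x y \<Longrightarrow> x \<noteq> y" for x y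
    using g unfolding graph_def by blast+
  define F where "F = {..<w} - f ` D"
  have "f ` D \<subseteq> {..<w}" using f DT unfolding proper_colouring_def by auto
  then have "card F = w - card (f ` D)"
    unfolding F_def by (simp add: card_Diff_subset finD)
  moreover have "card (f ` D) \<le> card D" using finD by (rule card_image_le)
  ultimately have "card K \<le> card F" using size by linarith
  then obtain g where gF: "g ` K \<subseteq> F" and inj: "inj_on g K"
    using card_le_inj[OF finK] unfolding F_def by blast
  define h where "h u = (if u \<in> K then g u else f u)" for u
  have "proper_colouring (T \<union> K) E h w" unfolding proper_colouring_def
  proof (intro conjI ballI impI)
    show "h x < w" if "x \<in> T \<union> K" for x
      using that gF f unfolding h_def F_def proper_colouring_def by auto
    have Kcol: "h k \<notin> f ` D" if "k \<in> K" for k using that gF unfolding h_def F_def by auto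
    fix x y assume x: "x \<in> T \<union> K" and y: "y \<in> T \<union> K" and e: "E x y"
    consider "x \<in> K" "y \<in> K" | "x \<in> K" "y \<in> T" | "x \<in> T" "y \<in> K" | "x \<in> T" "y \<in> T" "x \<notin> K" "y \<notin> K"
      using x y TK by blast
    then show "h x \<noteq> h y"
    proof cases
      case 1
      then show ?thesis using inj irr[OF e] unfolding h_def by (auto dest: inj_onD)
    next
      case 2
      then have "y \<in> D" using nbrs sym[OF e] by blast
      then show ?thesis using Kcol[of x] 2 TK unfolding h_def by auto
    next
      case 3
      then have "x \<in> D" using nbrs e by blast
      then show ?thesis using Kcol[of y] 3 TK unfolding h_def by force
    next
      case 4
      then show ?thesis using f e unfolding h_def proper_colouring_def by auto
    qed
  qed
  then show ?thesis by blast
qed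

lemma perfect_Un_clique:
  assumes g: "graph (A \<union> K) E" and pA: "perfect A E" and cK: "clique E K" and AK: "A \<inter> K = {}"
    and DA: "D \<subseteq> A" and cD: "clique E D" and DK: "\<forall>u\<in>D. \<forall>k\<in>K. E u k"
    and nbrs: "\<And>u k. u \<in> A \<Longrightarrow> k \<in> K \<Longrightarrow> E u k \<Longrightarrow> u \<in> D"
  shows "perfect (A \<union> K) E"
  unfolding perfect_iff_colourable[OF g]
proof (intro allI impI)
  fix S assume S: "S \<subseteq> A \<union> K"
  have gA: "graph A E" by (rule graph_subset[OF g]) blast
  have gS: "graph S E" by (rule graph_subset[OF g S])
  then have finS: "finite S" unfolding graph_def by blast
  obtain f where "proper_colouring (S \<inter> A) E f (omega (S \<inter> A) E)"
    using pA unfolding perfect_iff_colourable[OF gA] by blast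
  moreover have "omega (S \<inter> A) E \<le> omega S E" using omega_mono[OF finS] by blast
  ultimately have f: "proper_colouring (S \<inter> A) E f (omega S E)" by (rule proper_colouring_mono)
  have "clique E (S \<inter> K \<union> S \<inter> D)"
    using cK cD DK g unfolding clique_def graph_def by (metis IntD2 Un_iff)
  then have "card (S \<inter> K \<union> S \<inter> D) \<le> omega S E"
    by (intro card_clique_le_omega[OF finS]) auto
  moreover have "card (S \<inter> K \<union> S \<inter> D) = card (S \<inter> K) + card (S \<inter> D)"
    using finS AK DA by (intro card_Un_disjoint) auto
  ultimately have size: "card (S \<inter> K) + card (S \<inter> D) \<le> omega S E" by simp
  have "S \<inter> A \<union> S \<inter> K = S" using S by blast
  moreover have "\<exists>h. proper_colouring (S \<inter> A \<union> S \<inter> K) E h (omega S E)"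
  proof (rule proper_colouring_extend[OF _ f _ _ size])
    show "graph (S \<inter> A \<union> S \<inter> K) E" using gS \<open>S \<inter> A \<union> S \<inter> K = S\<close> by simp
    show "S \<inter> A \<inter> (S \<inter> K) = {}" using AK by blast
    show "S \<inter> D \<subseteq> S \<inter> A" using DA by blast
    show "u \<in> S \<inter> D" if "u \<in> S \<inter> A" "k \<in> S \<inter> K" "E u k" for u k
      using nbrs that by blast
  qed
  ultimately show "\<exists>h. proper_colouring S E h (omega S E)" by simp
qed

lemma perfect_Un_anticomplete_clique:
  assumes "graph (A \<union> K) E" "perfect A E" "clique E K" "A \<inter> K = {}" "anticomplete E A K"
  shows "perfect (A \<union> K) E"
  using assms by (intro perfect_Un_clique[where D = "{}"]) (auto simp: anticomplete_def clique_def)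

lemma perfect_empty: "perfect {} E"
  unfolding perfect_def chi_def omega_def by (auto simp: proper_colouring_def clique_def)

lemma perfect_stable:
  assumes "graph V E" "stable E V"
  shows "perfect V E"
proof -
  have "finite V" using assms(1) unfolding graph_def by blast
  then show ?thesis using assms
  proof (induction V rule: finite_induct)
    case empty
    show ?case by (rule perfect_empty)
  next
    case (insert v V)
    have "graph V E" "stable E V" using insert.prems graph_subset unfolding stable_def by blast+
    then have "perfect V E" by (rule insert.IH)
    then have "perfect (V \<union> {v}) E"
      using insert.prems insert.hyps
      by (intro perfect_Un_anticomplete_clique) (auto simp: clique_def anticomplete_def stable_def)
    then show ?case by simp
  qed
qed

lemma four_K1_free_anticomplete_clique:
  assumes g: "graph V E" and free: "four_K1_free V E"
    and "P \<subseteq> V" "Q \<subseteq> V" "P \<inter> Q = {}" and anti: "anticomplete E P Q"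
  shows "clique E P \<or> clique E Q"
proof (rule ccontr)
  assume "\<not> (clique E P \<or> clique E Q)"
  then obtain p1 p2 q1 q2 where p: "p1 \<in> P" "p2 \<in> P" "p1 \<noteq> p2" "\<not> E p1 p2"
    and q: "q1 \<in> Q" "q2 \<in> Q" "q1 \<noteq> q2" "\<not> E q1 q2"
    unfolding clique_def by blast
  have "p1 \<noteq> q1" "p1 \<noteq> q2" "p2 \<noteq> q1" "p2 \<noteq> q2" using p q \<open>P \<inter> Q = {}\<close> by blast+
  then have "card {p1, p2, q1, q2} = 4" using p(3) q(3) by simp
  moreover have "stable E {p1, p2, q1, q2}"
  proof -
    have "\<not> E x y" "\<not> E y x" if "x \<in> P" "y \<in> Q" for x y
      using anti g that unfolding anticomplete_def graph_def by blast+
    moreover have "\<not> E x x" "\<not> E p2 p1" "\<not> E q2 q1" for x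
      using g p(4) q(4) unfolding graph_def by blast+
    ultimately show ?thesis unfolding stable_def using p q by auto
  qed
  moreover have "{p1, p2, q1, q2} \<subseteq> V" using p q assms(3,4) by blast
  ultimately show False using free unfolding four_K1_free_def by blast
qed

lemma good_partition_non_neighbourhood:
  assumes g: "graph V E" and "v \<in> V" and "perfect {u\<in>V. \<not> E v u} E"
  shows "good_partition V E {u\<in>V. \<not> E v u} {u\<in>V. E v u}"
proof -
  have fin: "finite V" using g unfolding graph_def by blast
  obtain K where K: "K \<subseteq> {u\<in>V. E v u}" "clique E K" "card K = omega {u\<in>V. E v u} E"
    using ex_clique_card_omega[of "{u\<in>V. E v u}" E] fin by auto
  have "v \<notin> K" using K g unfolding graph_def by blast
  moreover have "clique E (insert v K)" using K g unfolding clique_def graph_def by blast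
  then have "card (insert v K) \<le> omega V E"
    using K \<open>v \<in> V\<close> by (intro card_clique_le_omega[OF fin]) auto
  ultimately have "omega {u\<in>V. E v u} E < omega V E"
    using K fin finite_subset by fastforce
  then show ?thesis unfolding good_partition_def using assms(3) by auto
qed

lemma perfectly_divisible_good_partition:
  assumes g: "graph V E" and "perfectly_divisible V E" and "V \<noteq> {}"
  shows "\<exists>A B. good_partition V E A B"
proof (cases "has_edge V E")
  case True
  then show ?thesis using assms(2) unfolding perfectly_divisible_def by blast
next
  case False
  then have "stable E V" using g unfolding has_edge_def stable_def by blast
  with g have "perfect V E" by (rule perfect_stable)
  moreover obtain v where "v \<in> V" using \<open>V \<noteq> {}\<close> by blast
  then have "omega {} E < omega V E"
    using g unfolding omega_empty graph_def by (intro omega_pos) auto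
  ultimately have "good_partition V E V {}" unfolding good_partition_def by simp
  then show ?thesis by blast
qed

text \<open>The induced subgraph witnessing non-divisibility can only be V itself.\<close>

lemma minimally_non_perfectly_divisible_no_good_partition:
  assumes "minimally_non_perfectly_divisible V E"
  shows "\<not> (\<exists>A B. good_partition V E A B)"
proof
  assume V: "\<exists>A B. good_partition V E A B"
  obtain S where S: "S \<subseteq> V" "has_edge S E" "\<not> (\<exists>A B. good_partition S E A B)"
    using assms unfolding minimally_non_perfectly_divisible_def perfectly_divisible_def by blast
  show False
  proof (cases "S = V")
    case True
    then show ?thesis using S V by blast
  next
    case False
    then have "perfectly_divisible S E"
      using S assms unfolding minimally_non_perfectly_divisible_def by blast
    then show ?thesis using S unfolding perfectly_divisible_def by blast
  qed
qed

lemma disconnected_split: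
  assumes "\<not> connected_graph W E"
  obtains X Y where "X \<union> Y = W" "X \<inter> Y = {}" "X \<noteq> {}" "Y \<noteq> {}" "anticomplete E X Y"
proof -
  define R where "R = (\<lambda>u v. u \<in> W \<and> v \<in> W \<and> E u v)"
  obtain a b where "a \<in> W" "b \<in> W" "\<not> R\<^sup>*\<^sup>* a b"
    using assms unfolding connected_graph_def R_def by blast
  define X where "X = {u \<in> W. R\<^sup>*\<^sup>* a u}"
  have "anticomplete E X (W - X)"
    unfolding anticomplete_def X_def R_def by (auto intro: rtranclp.rtrancl_into_rtrancl)
  moreover have "X \<noteq> {}" "W - X \<noteq> {}"
    using \<open>a \<in> W\<close> \<open>b \<in> W\<close> \<open>\<not> R\<^sup>*\<^sup>* a b\<close> unfolding X_def by auto
  ultimately show ?thesis using that[of X "W - X"] unfolding X_def by blast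
qed

lemma anticomplete_sym: "graph V E \<Longrightarrow> anticomplete E X Y \<Longrightarrow> anticomplete E Y X"
  unfolding graph_def anticomplete_def by blast

lemma perfect_non_neighbourhood:
  assumes g: "graph V E" and free: "four_K1_free V E"
    and C: "C \<subseteq> V" "clique E C" and XY: "X \<union> Y = V - C" "X \<inter> Y = {}" "anticomplete E X Y"
    and cX: "clique E X" and c: "c \<in> C" and x: "x \<in> X" "\<not> E c x"
  shows "perfect {u\<in>V. \<not> E c u} E"
proof -
  define X1 where "X1 = {u\<in>X. \<not> E c u}"
  define Y1 where "Y1 = {u\<in>Y. \<not> E c u}"
  have irr: "\<not> E u u" for u using g unfolding graph_def by blast
  have "x \<noteq> c" "c \<notin> Y" "x \<notin> Y" using c x XY by blast+
  then have "\<not> clique E {c, x}" using x(2) unfolding clique_def by simp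
  moreover have "anticomplete E {c, x} Y1"
    using x(1) XY(3) unfolding anticomplete_def Y1_def by blast
  moreover have "{c, x} \<subseteq> V" "Y1 \<subseteq> V" "{c, x} \<inter> Y1 = {}"
    using C c x(1) XY(1) \<open>c \<notin> Y\<close> \<open>x \<notin> Y\<close> unfolding Y1_def by auto
  ultimately have cY1: "clique E Y1"
    using four_K1_free_anticomplete_clique[OF g free, of "{c, x}" Y1] by blast
  have "u = c" if "u \<in> C" "\<not> E c u" for u using that C(2) c unfolding clique_def by metis
  then have N: "{u\<in>V. \<not> E c u} = {c} \<union> X1 \<union> Y1"
    using C c XY(1) irr unfolding X1_def Y1_def by auto
  have sub: "{c} \<union> X1 \<subseteq> V" "{c} \<union> X1 \<union> Y1 \<subseteq> V" using C c XY(1) unfolding X1_def Y1_def by blast+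
  have "perfect {c} E"
    using c C irr by (intro perfect_stable[OF graph_subset[OF g]]) (auto simp: stable_def)
  then have "perfect ({c} \<union> X1) E"
    by (rule perfect_Un_anticomplete_clique[OF graph_subset[OF g sub(1)]])
      (use cX c XY(1) in \<open>auto simp: X1_def clique_def anticomplete_def\<close>)
  then have "perfect ({c} \<union> X1 \<union> Y1) E"
    by (rule perfect_Un_anticomplete_clique[OF graph_subset[OF g sub(2)]])
      (use cY1 c XY in \<open>auto simp: X1_def Y1_def anticomplete_def\<close>)
  then show ?thesis using N by simp
qed

lemma good_partition_Un_clique_side:
  assumes g: "graph V E" and C: "C \<subseteq> V" "clique E C"
    and XY: "X \<union> Y = V - C" "X \<inter> Y = {}" "anticomplete E X Y"
    and cX: "clique E X" and CX: "\<forall>c\<in>C. \<forall>x\<in>X. E c x"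
    and AB: "good_partition (C \<union> Y) E A B"
  shows "good_partition V E (A \<union> X) B"
proof -
  have AB': "A \<union> B = C \<union> Y" "A \<inter> B = {}" "perfect A E" "omega B E < omega (C \<union> Y) E"
    using AB unfolding good_partition_def by blast+
  have "A \<union> X \<subseteq> V" using AB'(1) C XY(1) by blast
  have YX: "anticomplete E Y X" using anticomplete_sym[OF g XY(3)] .
  have "perfect (A \<union> X) E"
  proof (rule perfect_Un_clique[where D = "A \<inter> C"])
    show "graph (A \<union> X) E" using graph_subset[OF g \<open>A \<union> X \<subseteq> V\<close>] .
    show "A \<inter> X = {}" using AB'(1) XY(1,2) by blast
    show "clique E (A \<inter> C)" using C(2) unfolding clique_def by blast
    show "u \<in> A \<inter> C" if "u \<in> A" "k \<in> X" "E u k" for u k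
      using that AB'(1) YX unfolding anticomplete_def by blast
  qed (use AB'(3) cX CX in auto)
  moreover have "omega (C \<union> Y) E \<le> omega V E"
    using g C XY(1) unfolding graph_def by (intro omega_mono) auto
  ultimately show ?thesis
    using AB' C XY(1,2) unfolding good_partition_def by auto
qed

lemma clique_side_good_partition:
  assumes g: "graph V E" and free: "four_K1_free V E"
    and proper: "\<And>S. S \<subset> V \<Longrightarrow> perfectly_divisible S E"
    and C: "C \<subseteq> V" "clique E C"
    and XY: "X \<union> Y = V - C" "X \<inter> Y = {}" "X \<noteq> {}" "Y \<noteq> {}" "anticomplete E X Y"
    and cX: "clique E X"
  shows "\<exists>A B. good_partition V E A B"
proof (cases "\<exists>c\<in>C. \<exists>x\<in>X. \<not> E c x")
  case True
  then obtain c x where "c \<in> C" "x \<in> X" "\<not> E c x" by blast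
  then have "perfect {u\<in>V. \<not> E c u} E"
    using perfect_non_neighbourhood[OF g free C XY(1,2,5) cX] by blast
  then show ?thesis using good_partition_non_neighbourhood[OF g] \<open>c \<in> C\<close> C by blast
next
  case False
  have "C \<union> Y \<subset> V" using C XY(1-3) by blast
  then have "perfectly_divisible (C \<union> Y) E" "graph (C \<union> Y) E"
    using proper graph_subset[OF g] by auto
  then obtain A B where "good_partition (C \<union> Y) E A B"
    using perfectly_divisible_good_partition XY(4) by blast
  then have "good_partition V E (A \<union> X) B"
    using good_partition_Un_clique_side[OF g C XY(1,2,5) cX] False by blast
  then show ?thesis by blast
qed

lemma clique_cutset_good_partition:
  assumes g: "graph V E" and free: "four_K1_free V E"
    and proper: "\<And>S. S \<subset> V \<Longrightarrow> perfectly_divisible S E"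
    and "clique_cutset V E C"
  shows "\<exists>A B. good_partition V E A B"
proof -
  have C: "C \<subseteq> V" "clique E C" and "\<not> connected_graph (V - C) E"
    using assms(4) unfolding clique_cutset_def by blast+
  then obtain X Y where XY: "X \<union> Y = V - C" "X \<inter> Y = {}" "X \<noteq> {}" "Y \<noteq> {}"
    and XY_anti: "anticomplete E X Y"
    using disconnected_split by metis
  have YX_anti: "anticomplete E Y X" using anticomplete_sym[OF g XY_anti] .
  have "clique E X \<or> clique E Y"
    using four_K1_free_anticomplete_clique[OF g free _ _ XY(2) XY_anti] XY(1) by blast
  then show ?thesis
  proof
    assume "clique E X"
    then show ?thesis using clique_side_good_partition[OF g free proper C XY XY_anti] by blast
  next
    assume "clique E Y"
    moreover have "Y \<union> X = V - C" "Y \<inter> X = {}" using XY(1,2) by blast+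
    ultimately show ?thesis
      using clique_side_good_partition[OF g free proper C _ _ XY(4,3) YX_anti] by blast
  qed
qed

theorem theorem3:
  fixes V :: "'a set" and E :: "'a \<Rightarrow> 'a \<Rightarrow> bool"
  assumes "graph V E"
    and "four_K1_free V E"
    and "minimally_non_perfectly_divisible V E"
  shows "\<not> (\<exists>C. clique_cutset V E C)"
proof
  assume "\<exists>C. clique_cutset V E C"
  moreover have "\<And>S. S \<subset> V \<Longrightarrow> perfectly_divisible S E"
    using assms(3) unfolding minimally_non_perfectly_divisible_def by blast
  ultimately have "\<exists>A B. good_partition V E A B"
    using clique_cutset_good_partition[OF assms(1,2)] by blast
  then show False using minimally_non_perfectly_divisible_no_good_partition[OF assms(3)] by blast
qed

end
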